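(* Let $\Gamma_M$ ($M>0$) be a family of nonatomic routing games with a single OD pair with demand $M$, sharing the same graph, path set and edge costs $(c_e)_{e\in\mathcal E}$, where each $c_e$ is a polynomial. Then $\mathrm{PoA}(\Gamma_M)\to 1$ as $M\to \infty$.
   Context: A nonatomic routing game with a single OD pair consists of a finite directed multigraph with edge set $\mathcal E$, a nonempty finite set $\mathcal P$ of paths from an origin to a destination, a demand $M>0$, and continuous nondecreasing edge costs $c_e:[0,\infty)\to[0,\infty)$. Feasible flows: $f\in\mathbb R_+^{\mathcal P}$ with $\sum_p f_p=M$; loads $x_e=\sum_{p\ni e}f_p$; path costs $c_p(f)=\sum_{e\in p}c_e(x_e)$. A Wardrop equilibrium is a feasible $f^*$ with $c_p(f^* )\le c_{p'}(f^* )$ whenever $f^*_p>0$. Social cost $L(x)=\sum_e x_ec_e(x_e)$; $\mathrm{Opt}$ is its minimum over feasible loads, $\mathrm{Eq}=L(x^* )$ at an equilibrium load, and $\mathrm{PoA}=\mathrm{Eq}/\mathrm{Opt}$; it is assumed that $\mathrm{Opt}>0$ (otherwise $\mathrm{PoA}:=1$). *)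

theory Defs
  imports "HOL-Analysis.Analysis" "HOL-Computational_Algebra.Polynomial"
begin

fun walk_from :: "('e \<Rightarrow> 'v) \<Rightarrow> ('e \<Rightarrow> 'v) \<Rightarrow> 'v \<Rightarrow> 'e list \<Rightarrow> 'v list" where
  "walk_from src tgt u [] = [u]"
| "walk_from src tgt u (e # es) = u # walk_from src tgt (tgt e) es"

definition is_od_path :: "('e \<Rightarrow> 'v) \<Rightarrow> ('e \<Rightarrow> 'v) \<Rightarrow> 'v \<Rightarrow> 'v \<Rightarrow> 'e list \<Rightarrow> bool" where
  "is_od_path src tgt orig dest p \<longleftrightarrow>
     p \<noteq> [] \<and>
     (\<forall>i < length p - 1. tgt (p ! i) = src (p ! (i+1))) \<and>
     src (p ! 0) = orig \<and> tgt (last p) = dest \<and>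
     distinct (walk_from src tgt orig p)"

definition feasible :: "'e list set \<Rightarrow> real \<Rightarrow> ('e list \<Rightarrow> real) \<Rightarrow> bool" where
  "feasible P M f \<longleftrightarrow> (\<forall>p\<in>P. f p \<ge> 0) \<and> (\<Sum>p\<in>P. f p) = M"

definition load :: "'e list set \<Rightarrow> ('e list \<Rightarrow> real) \<Rightarrow> 'e \<Rightarrow> real" where
  "load P f e = (\<Sum>p\<in>{p\<in>P. e \<in> set p}. f p)"

definition path_cost :: "('e \<Rightarrow> real \<Rightarrow> real) \<Rightarrow> 'e list set \<Rightarrow> ('e list \<Rightarrow> real) \<Rightarrow> 'e list \<Rightarrow> real" where
  "path_cost c P f p = (\<Sum>e\<in>set p. c e (load P f e))"

definition wardrop :: "('e \<Rightarrow> real \<Rightarrow> real) \<Rightarrow> 'e list set \<Rightarrow> real \<Rightarrow> ('e list \<Rightarrow> real) \<Rightarrow> bool" where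
  "wardrop c P M f \<longleftrightarrow> feasible P M f \<and>
     (\<forall>p\<in>P. \<forall>p'\<in>P. f p > 0 \<longrightarrow> path_cost c P f p \<le> path_cost c P f p')"

definition social_cost :: "('e::finite \<Rightarrow> real \<Rightarrow> real) \<Rightarrow> ('e \<Rightarrow> real) \<Rightarrow> real" where
  "social_cost c x = (\<Sum>e\<in>UNIV. x e * c e (x e))"

definition Opt :: "('e::finite \<Rightarrow> real \<Rightarrow> real) \<Rightarrow> 'e list set \<Rightarrow> real \<Rightarrow> real" where
  "Opt c P M = Inf {social_cost c (load P f) | f. feasible P M f}"

definition PoA :: "('e::finite \<Rightarrow> real \<Rightarrow> real) \<Rightarrow> 'e list set \<Rightarrow> real \<Rightarrow> ('e list \<Rightarrow> real) \<Rightarrow> real" where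
  "PoA c P M f = (if Opt c P M > 0 then social_cost c (load P f) / Opt c P M else 1)"

end

theory Submission
  imports Defs "HOL-Computational_Algebra.Fundamental_Theorem_Algebra" "HOL-Library.Landau_Symbols"
begin

text \<open>If some path has identically zero cost, the price of anarchy is 1 for every demand.
  Otherwise write each cost as a polynomial q_e and let D be the least d such that some path p0
  uses only edges of degree at most d; then every path contains an edge of nonzero cost and
  degree at least D, so the optimum grows like M^(D+1). At equilibrium every used edge costs at
  most the cost of p0, which is O(M^D); hence on edges of degree above D the load is o(M) and
  x c(x) is o(M^(D+1)). For the Beckmann potential \<Phi>_e (the antiderivative of c_e) one has
  (D+1) \<Phi>_e(x) \<le> x c_e(x) + O(1 + x^D) on all edges, with the reverse inequality on edges of
  degree at most D. Since the equilibrium minimises the total potential, the equilibrium cost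
  exceeds the optimum by o(M^(D+1)), and the price of anarchy tends to 1.\<close>

section \<open>Polynomials and their antiderivatives\<close>

lemma power_le_one_plus_power:
  fixes x :: real
  assumes "0 \<le> x" "j \<le> D"
  shows "x ^ j \<le> 1 + x ^ D"
proof (cases "x \<le> 1")
  case True
  then have "x ^ j \<le> 1" by (rule power_le_one[OF assms(1)])
  then show ?thesis using assms(1) by (simp add: add_increasing2)
next
  case False
  then have "x ^ j \<le> x ^ D" using assms(2) by (intro power_increasing) auto
  then show ?thesis by simp
qed

lemma poly_le_sum_abs_coeff_power:
  fixes q :: "real poly"
  assumes "1 \<le> y" "degree q \<le> D"
  shows "poly q y \<le> (\<Sum>j\<le>degree q. \<bar>coeff q j\<bar>) * y ^ D"
proof -
  have "poly q y = (\<Sum>j\<le>degree q. coeff q j * y ^ j)" by (rule poly_altdef)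
  also have "\<dots> \<le> (\<Sum>j\<le>degree q. \<bar>coeff q j\<bar> * y ^ D)"
  proof (rule sum_mono)
    fix j assume "j \<in> {..degree q}"
    then have "y ^ j \<le> y ^ D" using assms by (intro power_increasing) auto
    then show "coeff q j * y ^ j \<le> \<bar>coeff q j\<bar> * y ^ D"
      using assms(1) by (intro mult_mono) auto
  qed
  finally show ?thesis by (simp add: sum_distrib_right)
qed

lemma lead_coeff_pos_if_nonneg:
  fixes q :: "real poly"
  assumes "q \<noteq> 0" "\<forall>x\<ge>0. 0 \<le> poly q x"
  shows "0 < lead_coeff q"
proof (rule ccontr)
  assume "\<not> 0 < lead_coeff q"
  with assms(1) have "0 < lead_coeff (- q)" by (simp add: less_le)
  then obtain n where "\<forall>x\<ge>n. lead_coeff (- q) \<le> poly (- q) x" using poly_pinfty_gt_lc by blast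
  then have "0 < poly (- q) (max n 0)" using \<open>0 < lead_coeff (- q)\<close> by (meson max.cobounded1 less_le_trans)
  moreover have "0 \<le> poly q (max n 0)" using assms(2) by simp
  ultimately show False by simp
qed

lemma poly_eventually_ge_half_lead:
  fixes q :: "real poly"
  assumes "0 < lead_coeff q"
  shows "eventually (\<lambda>y. lead_coeff q / 2 * y ^ degree q \<le> poly q y) at_top"
proof -
  define r where "r = q - monom (lead_coeff q / 2) (degree q)"
  have r_top: "coeff r (degree q) = lead_coeff q / 2" by (simp add: r_def)
  have "degree r \<le> degree q" unfolding r_def by (intro degree_diff_le order.refl degree_monom_le)
  moreover have "degree q \<le> degree r" using r_top assms by (intro le_degree) simp
  ultimately have lead_r: "lead_coeff r = lead_coeff q / 2" using r_top by simp
  with assms have "0 < lead_coeff r" by simp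
  then obtain n where n: "\<forall>y\<ge>n. lead_coeff r \<le> poly r y" using poly_pinfty_gt_lc by blast
  have "lead_coeff q / 2 * y ^ degree q \<le> poly q y" if "n \<le> y" for y
  proof -
    have "0 < lead_coeff r" by fact
    also have "\<dots> \<le> poly r y" using n that by simp
    also have "\<dots> = poly q y - lead_coeff q / 2 * y ^ degree q" by (simp add: r_def poly_monom)
    finally show ?thesis by simp
  qed
  then show ?thesis unfolding eventually_at_top_linorder by blast
qed

definition antideriv :: "real poly \<Rightarrow> real poly" where
  "antideriv q = (\<Sum>j\<le>degree q. monom (coeff q j / real (Suc j)) (Suc j))"

lemma coeff_antideriv:
  "coeff (antideriv q) n = (if n = 0 then 0 else coeff q (n - 1) / real n)"
  by (cases n) (auto simp: antideriv_def coeff_sum coeff_monom coeff_eq_0)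

lemma pderiv_antideriv [simp]: "pderiv (antideriv q) = q"
  by (rule poly_eqI) (simp add: coeff_pderiv coeff_antideriv)

lemma poly_antideriv_0 [simp]: "poly (antideriv q) 0 = 0"
  by (simp add: poly_0_coeff_0 coeff_antideriv)

lemma antideriv_subgradient:
  fixes c :: "real \<Rightarrow> real"
  assumes cq: "\<forall>x\<ge>0. c x = poly q x" and mono: "mono_on {0..} c" and "0 \<le> x" "0 \<le> y"
  shows "c x * (y - x) \<le> poly (antideriv q) y - poly (antideriv q) x"
proof -
  obtain z where z: "z \<in> {min x y..max x y}"
    and mvt: "poly (antideriv q) y - poly (antideriv q) x = (y - x) * poly q z"
    using poly_MVT'[of x y "{min x y..max x y}" "antideriv q"] by auto
  have z0: "0 \<le> z" using z \<open>0 \<le> x\<close> \<open>0 \<le> y\<close> by auto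
  have "(y - x) * c x \<le> (y - x) * c z"
  proof (cases "x \<le> y")
    case True
    then have "c x \<le> c z" using z \<open>0 \<le> x\<close> by (intro mono_onD[OF mono]) auto
    with True show ?thesis by (simp add: mult_left_mono)
  next
    case False
    then have "c z \<le> c x" using z z0 by (intro mono_onD[OF mono]) auto
    with False show ?thesis by (simp add: mult_left_mono_neg)
  qed
  then show ?thesis using mvt cq z0 by (simp add: mult.commute)
qed

lemma antideriv_nonneg:
  fixes c :: "real \<Rightarrow> real"
  assumes "\<forall>x\<ge>0. c x = poly q x" "mono_on {0..} c" "\<forall>x\<ge>0. 0 \<le> c x" "0 \<le> y"
  shows "0 \<le> poly (antideriv q) y"
proof -
  have "0 \<le> c 0 * y" using assms(3,4) by simp
  also have "\<dots> \<le> poly (antideriv q) y"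
    using antideriv_subgradient[OF assms(1,2) order.refl assms(4)] by simp
  finally show ?thesis .
qed

definition potential_gap :: "nat \<Rightarrow> real poly \<Rightarrow> real poly" where
  "potential_gap D q = smult (real D + 1) (antideriv q) - pCons 0 q"

lemma poly_potential_gap:
  "poly (potential_gap D q) x = (real D + 1) * poly (antideriv q) x - x * poly q x"
  by (simp add: potential_gap_def)

lemma coeff_potential_gap_Suc:
  "coeff (potential_gap D q) (Suc j) = coeff q j * ((real D + 1) / real (Suc j) - 1)"
  by (simp add: potential_gap_def coeff_antideriv algebra_simps)

lemma degree_potential_gap_le:
  assumes "degree q \<le> D"
  shows "degree (potential_gap D q) \<le> D"
proof (rule degree_le, intro allI impI)
  fix i assume "D < i"
  then obtain j where j: "i = Suc j" "D \<le> j" by (cases i) auto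
  then show "coeff (potential_gap D q) i = 0"
    using assms by (cases "j = D") (auto simp: coeff_potential_gap_Suc coeff_eq_0)
qed

lemma lead_coeff_potential_gap_neg:
  assumes "D < degree q" "0 < lead_coeff q"
  shows "lead_coeff (potential_gap D q) < 0"
proof -
  let ?g = "potential_gap D q" and ?d = "degree q"
  have "(real D + 1) / real (Suc ?d) < 1" using assms(1) by (simp add: divide_less_eq)
  then have top: "coeff ?g (Suc ?d) < 0"
    using assms(2) by (simp add: coeff_potential_gap_Suc mult_pos_neg)
  have "degree ?g \<le> Suc ?d"
  proof (rule degree_le, intro allI impI)
    fix i assume "Suc ?d < i"
    then obtain j where "i = Suc j" "?d < j" by (cases i) auto
    then show "coeff ?g i = 0" by (simp add: coeff_potential_gap_Suc coeff_eq_0)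
  qed
  moreover have "Suc ?d \<le> degree ?g" using top by (intro le_degree) simp
  ultimately show ?thesis using top by simp
qed

lemma poly_le_power_bound:
  fixes p :: "real poly"
  assumes "degree p \<le> D \<or> lead_coeff p < 0"
  shows "\<exists>K\<ge>0. \<forall>x\<ge>0. poly p x \<le> K * (1 + x ^ D)"
  using assms
proof
  assume deg: "degree p \<le> D"
  have "poly p x \<le> (\<Sum>j\<le>degree p. \<bar>coeff p j\<bar>) * (1 + x ^ D)" if "0 \<le> x" for x
  proof -
    have "poly p x = (\<Sum>j\<le>degree p. coeff p j * x ^ j)" by (rule poly_altdef)
    also have "\<dots> \<le> (\<Sum>j\<le>degree p. \<bar>coeff p j\<bar> * (1 + x ^ D))"
      using that deg by (intro sum_mono mult_mono power_le_one_plus_power) auto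
    finally show ?thesis by (simp add: sum_distrib_right)
  qed
  then show ?thesis by (intro exI[of _ "\<Sum>j\<le>degree p. \<bar>coeff p j\<bar>"]) auto
next
  assume "lead_coeff p < 0"
  then have "0 < lead_coeff (- p)" by simp
  then obtain n where n: "\<forall>x\<ge>n. lead_coeff (- p) \<le> poly (- p) x" using poly_pinfty_gt_lc by blast
  obtain K where K: "0 < K" "\<forall>z. norm z \<le> n \<longrightarrow> norm (poly p z) \<le> K"
    using poly_bound_exists by blast
  have bound: "poly p x \<le> K * (1 + x ^ D)" if "0 \<le> x" for x
  proof (cases "x \<le> n")
    case True
    then have "poly p x \<le> K" using K(2)[rule_format, of x] that by (simp add: abs_le_iff)
    also have "K \<le> K * (1 + x ^ D)" using K that by simp
    finally show ?thesis .
  next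
    case False
    then have "poly p x \<le> 0" using n[rule_format, of x] \<open>0 < lead_coeff (- p)\<close> by simp
    moreover have "0 \<le> K * (1 + x ^ D)" using \<open>0 < K\<close> that by simp
    ultimately show ?thesis by linarith
  qed
  then show ?thesis using \<open>0 < K\<close> less_imp_le by blast
qed

lemma antideriv_upper_bound:
  assumes "q \<noteq> 0 \<longrightarrow> 0 < lead_coeff q"
  shows "\<exists>K\<ge>0. \<forall>x\<ge>0. (real D + 1) * poly (antideriv q) x \<le> x * poly q x + K * (1 + x ^ D)"
proof -
  have "degree (potential_gap D q) \<le> D \<or> lead_coeff (potential_gap D q) < 0"
  proof (cases "degree q \<le> D")
    case True then show ?thesis by (simp add: degree_potential_gap_le)
  next
    case False
    then have "q \<noteq> 0" by auto
    with False assms show ?thesis by (simp add: lead_coeff_potential_gap_neg)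
  qed
  from poly_le_power_bound[OF this] show ?thesis
    by (simp add: poly_potential_gap algebra_simps)
qed

lemma antideriv_lower_bound:
  assumes "degree q \<le> D"
  shows "\<exists>K\<ge>0. \<forall>x\<ge>0. x * poly q x \<le> (real D + 1) * poly (antideriv q) x + K * (1 + x ^ D)"
proof -
  have "degree (- potential_gap D q) \<le> D" using assms by (simp add: degree_potential_gap_le)
  from poly_le_power_bound[OF disjI1[OF this]] show ?thesis
    by (simp add: poly_potential_gap algebra_simps)
qed

lemma antideriv_power_bounds:
  fixes q :: "real poly"
  assumes "q \<noteq> 0 \<longrightarrow> 0 < lead_coeff q"
  shows "\<exists>K\<ge>0. \<forall>x\<ge>0. (real D + 1) * poly (antideriv q) x \<le> x * poly q x + K * (1 + x ^ D) \<and>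
           (degree q \<le> D \<longrightarrow> x * poly q x \<le> (real D + 1) * poly (antideriv q) x + K * (1 + x ^ D))"
proof -
  obtain K1 where "0 \<le> K1"
    and upper: "\<forall>x\<ge>0. (real D + 1) * poly (antideriv q) x \<le> x * poly q x + K1 * (1 + x ^ D)"
    using antideriv_upper_bound[OF assms] by blast
  obtain K2 where "0 \<le> K2" and lower: "degree q \<le> D \<longrightarrow>
      (\<forall>x\<ge>0. x * poly q x \<le> (real D + 1) * poly (antideriv q) x + K2 * (1 + x ^ D))"
    using antideriv_lower_bound by (cases "degree q \<le> D") blast+
  have "K1 * (1 + x ^ D) \<le> (K1 + K2) * (1 + x ^ D)" "K2 * (1 + x ^ D) \<le> (K1 + K2) * (1 + x ^ D)"
    if "0 \<le> x" for x
    using that \<open>0 \<le> K1\<close> \<open>0 \<le> K2\<close> by (intro mult_right_mono; simp)+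
  then show ?thesis using upper lower \<open>0 \<le> K1\<close> \<open>0 \<le> K2\<close>
    by (intro exI[of _ "K1 + K2"]) (smt (verit))
qed

section \<open>Flows, loads and the Beckmann potential\<close>

lemma feasible_nonneg: "feasible P M f \<Longrightarrow> p \<in> P \<Longrightarrow> 0 \<le> f p"
  by (simp add: feasible_def)

lemma load_nonneg: "feasible P M f \<Longrightarrow> 0 \<le> load P f e"
  unfolding load_def feasible_def by (intro sum_nonneg) auto

lemma load_le_demand:
  assumes "finite P" "feasible P M f"
  shows "load P f e \<le> M"
proof -
  have "load P f e \<le> sum f P"
    unfolding load_def using assms by (intro sum_mono2) (auto simp: feasible_def)
  then show ?thesis using assms(2) by (simp add: feasible_def)
qed

lemma path_flow_le_load:
  "finite P \<Longrightarrow> feasible P M f \<Longrightarrow> p \<in> P \<Longrightarrow> e \<in> set p \<Longrightarrow> f p \<le> load P f e"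
  unfolding load_def feasible_def by (intro member_le_sum) auto

lemma load_pos_imp_used_path:
  assumes "feasible P M f" "0 < load P f e"
  obtains p where "p \<in> P" "e \<in> set p" "0 < f p"
proof -
  have "\<exists>p\<in>{p\<in>P. e \<in> set p}. f p \<noteq> 0"
  proof (rule ccontr)
    assume "\<not> ?thesis"
    then have "load P f e = 0" unfolding load_def by (intro sum.neutral) blast
    with assms(2) show False by simp
  qed
  then show ?thesis using that feasible_nonneg[OF assms(1)] by (force simp: less_le)
qed

lemma sum_mult_load:
  fixes h :: "'e::finite \<Rightarrow> real"
  assumes "finite P"
  shows "(\<Sum>e\<in>UNIV. h e * load P g e) = (\<Sum>p\<in>P. g p * (\<Sum>e\<in>set p. h e))"
  unfolding load_def sum_distrib_left using assms
  by (subst sum.swap_restrict) (auto simp: sum_distrib_right mult.commute)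

lemma social_cost_eq_sum_path_cost:
  fixes c :: "'e::finite \<Rightarrow> real \<Rightarrow> real"
  assumes "finite P"
  shows "social_cost c (load P f) = (\<Sum>p\<in>P. f p * path_cost c P f p)"
  unfolding social_cost_def path_cost_def
  using sum_mult_load[OF assms, of "\<lambda>e. c e (load P f e)" f] by (simp add: mult.commute)

lemma wardrop_variational_inequality:
  fixes c :: "'e::finite \<Rightarrow> real \<Rightarrow> real"
  assumes "finite P" "P \<noteq> {}" "wardrop c P M f" "feasible P M g"
  shows "(\<Sum>e\<in>UNIV. c e (load P f e) * load P f e) \<le> (\<Sum>e\<in>UNIV. c e (load P f e) * load P g e)"
proof -
  let ?C = "path_cost c P f"
  define m where "m = Min (?C ` P)"
  have f: "feasible P M f" using assms(3) by (simp add: wardrop_def)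
  have "f p * ?C p \<le> f p * m" if "p \<in> P" for p
  proof (cases "0 < f p")
    case True
    then have "?C p \<le> m"
      unfolding m_def using assms(1-3) that by (intro Min.boundedI) (auto simp: wardrop_def)
    with True show ?thesis by simp
  next
    case False
    then have "f p = 0" using feasible_nonneg[OF f that] by simp
    then show ?thesis by simp
  qed
  then have "(\<Sum>p\<in>P. f p * ?C p) \<le> (\<Sum>p\<in>P. f p * m)" by (rule sum_mono)
  also have "\<dots> = (\<Sum>p\<in>P. g p * m)"
    using f assms(4) by (simp add: feasible_def sum_distrib_right[symmetric])
  also have "\<dots> \<le> (\<Sum>p\<in>P. g p * ?C p)"
    using assms(1) assms(4) by (intro sum_mono mult_left_mono) (auto simp: m_def feasible_def)
  finally show ?thesis
    using sum_mult_load[OF assms(1)] by (simp add: path_cost_def)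
qed

lemma social_cost_nonneg:
  fixes c :: "'e::finite \<Rightarrow> real \<Rightarrow> real"
  assumes "\<forall>e. \<forall>x\<ge>0. 0 \<le> c e x" "feasible P M f"
  shows "0 \<le> social_cost c (load P f)"
  unfolding social_cost_def using assms load_nonneg[OF assms(2)] by (intro sum_nonneg) auto

lemma Opt_lower:
  fixes c :: "'e::finite \<Rightarrow> real \<Rightarrow> real"
  assumes "\<forall>e. \<forall>x\<ge>0. 0 \<le> c e x" "feasible P M f"
  shows "Opt c P M \<le> social_cost c (load P f)"
  unfolding Opt_def
proof (rule cInf_lower)
  show "bdd_below {social_cost c (load P f) |f. feasible P M f}"
    using social_cost_nonneg[OF assms(1)] by (intro bdd_belowI[of _ 0]) blast
qed (use assms(2) in blast)

lemma Opt_greatest: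
  fixes c :: "'e::finite \<Rightarrow> real \<Rightarrow> real"
  assumes "finite P" "P \<noteq> {}" "0 \<le> M" "\<And>f. feasible P M f \<Longrightarrow> z \<le> social_cost c (load P f)"
  shows "z \<le> Opt c P M"
  unfolding Opt_def
proof (rule cInf_greatest)
  have "feasible P M (\<lambda>p. M / real (card P))"
    using assms(1-3) by (simp add: feasible_def card_gt_0_iff)
  then show "{social_cost c (load P f) |f. feasible P M f} \<noteq> {}" by blast
qed (use assms(4) in blast)

lemma social_cost_le_Opt_plus:
  fixes c \<Phi> :: "'e::finite \<Rightarrow> real \<Rightarrow> real"
  assumes P: "finite P" "P \<noteq> {}" and "0 \<le> M" and w: "wardrop c P M f"
    and subgradient: "\<And>e x y. 0 \<le> x \<Longrightarrow> 0 \<le> y \<Longrightarrow> c e x * (y - x) \<le> \<Phi> e y - \<Phi> e x"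
    and "0 \<le> \<kappa>"
    and equilibrium_bound: "\<And>e. load P f e * c e (load P f e) \<le> \<kappa> * \<Phi> e (load P f e) + r e"
    and optimum_bound: "\<And>e y. 0 \<le> y \<Longrightarrow> y \<le> M \<Longrightarrow> \<kappa> * \<Phi> e y \<le> y * c e y + s e"
  shows "social_cost c (load P f) - (\<Sum>e\<in>UNIV. r e + s e) \<le> Opt c P M"
proof (rule Opt_greatest[OF P \<open>0 \<le> M\<close>])
  fix g assume g: "feasible P M g"
  have f: "feasible P M f" using w by (simp add: wardrop_def)
  let ?x = "load P f" and ?y = "load P g"
  have "0 \<le> (\<Sum>e\<in>UNIV. c e (?x e) * (?y e - ?x e))"
    using wardrop_variational_inequality[OF P w g] by (simp add: right_diff_distrib sum_subtractf)
  also have "\<dots> \<le> (\<Sum>e\<in>UNIV. \<Phi> e (?y e) - \<Phi> e (?x e))"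
    using load_nonneg[OF f] load_nonneg[OF g] by (intro sum_mono subgradient)
  finally have potential: "(\<Sum>e\<in>UNIV. \<Phi> e (?x e)) \<le> (\<Sum>e\<in>UNIV. \<Phi> e (?y e))"
    by (simp add: sum_subtractf)
  have "social_cost c ?x \<le> (\<Sum>e\<in>UNIV. \<kappa> * \<Phi> e (?x e) + r e)"
    unfolding social_cost_def by (intro sum_mono equilibrium_bound)
  also have "\<dots> \<le> (\<Sum>e\<in>UNIV. \<kappa> * \<Phi> e (?y e) + r e)"
    using potential \<open>0 \<le> \<kappa>\<close> by (simp add: sum.distrib sum_distrib_left[symmetric] mult_left_mono)
  also have "\<dots> \<le> (\<Sum>e\<in>UNIV. ?y e * c e (?y e) + s e + r e)"
    using load_nonneg[OF g] load_le_demand[OF P(1) g] by (intro sum_mono add_right_mono optimum_bound)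
  finally show "social_cost c ?x - (\<Sum>e\<in>UNIV. r e + s e) \<le> social_cost c ?y"
    by (simp add: social_cost_def sum.distrib)
qed

lemma PoA_eq_1_if_free_path:
  fixes c :: "'e::finite \<Rightarrow> real \<Rightarrow> real"
  assumes "finite P" "wardrop c P M f" and nonneg: "\<forall>e. \<forall>x\<ge>0. 0 \<le> c e x"
    and "p0 \<in> P" "\<forall>e\<in>set p0. \<forall>x\<ge>0. c e x = 0"
  shows "PoA c P M f = 1"
proof -
  have f: "feasible P M f" using assms(2) by (simp add: wardrop_def)
  have cost_nonneg: "0 \<le> path_cost c P f p" for p
    unfolding path_cost_def using nonneg load_nonneg[OF f] by (intro sum_nonneg) auto
  have "path_cost c P f p0 = 0"
    unfolding path_cost_def using assms(5) load_nonneg[OF f] by (intro sum.neutral) auto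
  have "f p * path_cost c P f p = 0" if "p \<in> P" for p
  proof (cases "0 < f p")
    case True
    then have "path_cost c P f p \<le> path_cost c P f p0" using assms(2,4) that by (auto simp: wardrop_def)
    then show ?thesis using \<open>path_cost c P f p0 = 0\<close> cost_nonneg[of p] by simp
  next
    case False
    then have "f p = 0" using feasible_nonneg[OF f that] by simp
    then show ?thesis by simp
  qed
  then have "social_cost c (load P f) = 0"
    unfolding social_cost_eq_sum_path_cost[OF assms(1)] by (intro sum.neutral) blast
  then have "\<not> 0 < Opt c P M" using Opt_lower[OF nonneg f] by simp
  then show ?thesis by (simp add: PoA_def)
qed

lemma wardrop_edge_cost_le_path_cost:
  fixes c :: "'e::finite \<Rightarrow> real \<Rightarrow> real"
  assumes "wardrop c P M f" "\<forall>e. \<forall>x\<ge>0. 0 \<le> c e x" "p0 \<in> P" "0 < load P f e"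
  shows "c e (load P f e) \<le> path_cost c P f p0"
proof -
  have f: "feasible P M f" using assms(1) by (simp add: wardrop_def)
  obtain p where p: "p \<in> P" "e \<in> set p" "0 < f p" using load_pos_imp_used_path[OF f assms(4)] .
  have "c e (load P f e) \<le> path_cost c P f p"
    unfolding path_cost_def using p assms(2) load_nonneg[OF f] by (intro member_le_sum) auto
  also have "\<dots> \<le> path_cost c P f p0" using assms(1,3) p by (auto simp: wardrop_def)
  finally show ?thesis .
qed

lemma path_cost_le_power:
  fixes c :: "'e::finite \<Rightarrow> real \<Rightarrow> real"
  assumes "finite P" "feasible P M f" "1 \<le> M"
    and mono: "\<forall>e. mono_on {0..} (c e)" and q: "\<forall>e. \<forall>x\<ge>0. c e x = poly (q e) x"
    and deg: "\<forall>e\<in>set p. degree (q e) \<le> D"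
  shows "path_cost c P f p \<le> (\<Sum>e\<in>set p. \<Sum>j\<le>degree (q e). \<bar>coeff (q e) j\<bar>) * M ^ D"
proof -
  have "c e (load P f e) \<le> (\<Sum>j\<le>degree (q e). \<bar>coeff (q e) j\<bar>) * M ^ D" if e: "e \<in> set p" for e
  proof -
    have "c e (load P f e) \<le> c e M"
      using load_nonneg[OF assms(2)] load_le_demand[OF assms(1,2)] assms(3)
      by (intro mono_onD[OF mono[rule_format]]) auto
    also have "\<dots> = poly (q e) M" using q assms(3) by simp
    also have "\<dots> \<le> (\<Sum>j\<le>degree (q e). \<bar>coeff (q e) j\<bar>) * M ^ D"
      using assms(3) deg e by (intro poly_le_sum_abs_coeff_power) auto
    finally show ?thesis .
  qed
  then show ?thesis unfolding path_cost_def sum_distrib_right by (intro sum_mono) auto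
qed

lemma social_cost_ge_power:
  fixes c :: "'e::finite \<Rightarrow> real \<Rightarrow> real"
  assumes P: "finite P" "P \<noteq> {}" and g: "feasible P M g"
    and mono: "\<forall>e. mono_on {0..} (c e)" and nonneg: "\<forall>e. \<forall>x\<ge>0. 0 \<le> c e x"
    and dominant: "\<forall>p\<in>P. \<exists>e\<in>set p. \<forall>y\<ge>Y. a * y ^ D \<le> c e y"
    and "0 \<le> a" "0 \<le> Y" "real (card P) * Y \<le> M"
  shows "a * (M / real (card P)) ^ Suc D \<le> social_cost c (load P g)"
proof -
  define y where "y = M / real (card P)"
  have card: "0 < real (card P)" using P by (simp add: card_gt_0_iff)
  have yY: "Y \<le> y" unfolding y_def using assms(9) card by (simp add: pos_le_divide_eq mult.commute)
  have "\<exists>p\<in>P. y \<le> g p"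
  proof (rule ccontr)
    assume "\<not> ?thesis"
    then have "sum g P < (\<Sum>p\<in>P. y)" using P by (intro sum_strict_mono) auto
    also have "\<dots> = M" using card by (simp add: y_def)
    finally show False using g by (simp add: feasible_def)
  qed
  then obtain p e where p: "p \<in> P" "y \<le> g p" and e: "e \<in> set p" "\<forall>y\<ge>Y. a * y ^ D \<le> c e y"
    using dominant by blast
  have load: "y \<le> load P g e" using path_flow_le_load[OF P(1) g p(1) e(1)] p(2) by linarith
  have "a * y ^ D \<le> c e (load P g e)"
    using e(2) yY load \<open>0 \<le> Y\<close> by (meson mono_onD[OF mono[rule_format]] atLeast_iff order_trans)
  then have "y * (a * y ^ D) \<le> load P g e * c e (load P g e)"
    using load yY \<open>0 \<le> a\<close> \<open>0 \<le> Y\<close> by (intro mult_mono) auto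
  also have "\<dots> \<le> social_cost c (load P g)"
    unfolding social_cost_def using nonneg load_nonneg[OF g]
    by (intro member_le_sum[where i = e]) auto
  finally show ?thesis by (simp add: y_def[symmetric] ac_simps)
qed

section \<open>Asymptotics in the demand\<close>

lemma one_plus_power_smallo: "(\<lambda>M::real. K * (1 + M ^ D)) \<in> o[at_top](\<lambda>M. M ^ Suc D)"
proof -
  have "(\<lambda>M::real. 1) \<in> o[at_top](\<lambda>M. M)"
    by (rule smalloI_tendsto)
      (auto simp: divide_inverse intro!: tendsto_inverse_0_at_top filterlim_ident
        eventually_mono[OF eventually_gt_at_top[of 0]])
  moreover have "(\<lambda>M::real. 1 + M ^ D) \<in> O[at_top](\<lambda>M. M ^ D)"
    by (rule bigoI[of _ 2]) (auto intro: eventually_mono[OF eventually_ge_at_top[of 1]])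
  ultimately have "(\<lambda>M::real. 1 * (1 + M ^ D)) \<in> o[at_top](\<lambda>M. M * M ^ D)"
    by (rule landau_o.small_big_mult)
  then show ?thesis by simp
qed

lemma load_in_smallo:
  fixes x c :: "real \<Rightarrow> real"
  assumes bounded: "eventually (\<lambda>M. 0 < x M \<longrightarrow> c (x M) \<le> B * M ^ D) at_top"
    and growth: "eventually (\<lambda>y. a * y ^ Suc D \<le> c y) at_top" and "0 < a"
    and nonneg: "eventually (\<lambda>M. 0 \<le> x M) at_top"
  shows "x \<in> o[at_top](\<lambda>M. M)"
proof (rule landau_o.smallI)
  fix \<delta> :: real assume "0 < \<delta>"
  obtain Y where Y: "\<And>y. Y \<le> y \<Longrightarrow> a * y ^ Suc D \<le> c y"
    using growth by (auto simp: eventually_at_top_linorder)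
  define M0 where "M0 = max 1 (max (Y / \<delta>) (B / (a * \<delta> ^ Suc D) + 1))"
  show "eventually (\<lambda>M. norm (x M) \<le> \<delta> * norm M) at_top"
    using bounded nonneg eventually_ge_at_top[of M0]
  proof eventually_elim
    case (elim M)
    have "0 < a * \<delta> ^ Suc D" using \<open>0 < \<delta>\<close> \<open>0 < a\<close> by simp
    moreover have "B / (a * \<delta> ^ Suc D) < M" using elim(3) by (simp add: M0_def)
    ultimately have M: "1 \<le> M" "Y \<le> \<delta> * M" "B < a * \<delta> ^ Suc D * M"
      using elim(3) \<open>0 < \<delta>\<close> by (auto simp: M0_def pos_divide_less_eq pos_divide_le_eq mult.commute)
    show ?case
    proof (rule ccontr)
      assume "\<not> ?case"
      then have big: "\<delta> * M < x M" using M elim(2) by simp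
      moreover have "0 < \<delta> * M" using \<open>0 < \<delta>\<close> M(1) by simp
      ultimately have "0 < x M" by linarith
      have "a * \<delta> ^ Suc D * M * M ^ D = a * (\<delta> * M) ^ Suc D" by (simp add: power_mult_distrib)
      also have "\<dots> \<le> a * x M ^ Suc D"
        using big \<open>0 < \<delta>\<close> \<open>0 < a\<close> M by (intro mult_left_mono power_mono) auto
      also have "\<dots> \<le> c (x M)" using Y M big by simp
      also have "\<dots> \<le> B * M ^ D" using elim(1) \<open>0 < x M\<close> by simp
      finally have "a * \<delta> ^ Suc D * M \<le> B" using M by simp
      with M show False by simp
    qed
  qed
qed

lemma load_cost_in_smallo:
  fixes x c :: "real \<Rightarrow> real"
  assumes bounded: "eventually (\<lambda>M. 0 < x M \<longrightarrow> c (x M) \<le> B * M ^ D) at_top"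
    and growth: "eventually (\<lambda>y. a * y ^ Suc D \<le> c y) at_top" and "0 < a"
    and nonneg: "eventually (\<lambda>M. 0 \<le> x M) at_top" and c_nonneg: "\<forall>y\<ge>0. 0 \<le> c y"
  shows "(\<lambda>M. x M * c (x M)) \<in> o[at_top](\<lambda>M. M ^ Suc D)"
proof -
  have "eventually (\<lambda>M. norm (x M * c (x M)) \<le> \<bar>B\<bar> * norm (x M * M ^ D)) at_top"
    using bounded nonneg eventually_ge_at_top[of 0]
  proof eventually_elim
    case (elim M)
    show ?case
    proof (cases "x M = 0")
      case False
      then have "c (x M) \<le> B * M ^ D" using elim by simp
      also have "\<dots> \<le> \<bar>B\<bar> * M ^ D" using elim(3) by (intro mult_right_mono) auto
      finally have "c (x M) \<le> \<bar>B\<bar> * M ^ D" .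
      then have "x M * c (x M) \<le> x M * (\<bar>B\<bar> * M ^ D)" using elim(2) by (rule mult_left_mono)
      then show ?thesis using elim c_nonneg by (simp add: abs_mult ac_simps)
    qed simp
  qed
  then have "(\<lambda>M. x M * c (x M)) \<in> O[at_top](\<lambda>M. x M * M ^ D)" by (rule bigoI)
  moreover have "(\<lambda>M. x M * M ^ D) \<in> o[at_top](\<lambda>M. M * M ^ D)"
    by (intro landau_o.small_big_mult load_in_smallo[OF bounded growth \<open>0 < a\<close> nonneg]
        landau_o.big_refl)
  ultimately show ?thesis by (simp add: landau_o.big_small_trans)
qed

lemma ratio_tendsto_one:
  fixes cost best err :: "real \<Rightarrow> real"
  assumes bounds: "eventually (\<lambda>M. best M \<le> cost M \<and> cost M \<le> best M + err M) at_top"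
    and lower: "eventually (\<lambda>M. b * M ^ k \<le> best M) at_top" and "0 < b"
    and small: "err \<in> o[at_top](\<lambda>M. M ^ k)"
  shows "((\<lambda>M. if 0 < best M then cost M / best M else 1) \<longlongrightarrow> 1) at_top"
proof -
  have pos: "eventually (\<lambda>M. 0 < best M) at_top"
    using lower eventually_gt_at_top[of 0]
    by eventually_elim (metis \<open>0 < b\<close> mult_pos_pos zero_less_power order_less_le_trans)
  have "eventually (\<lambda>M. norm (M ^ k) \<le> 1 / b * norm (best M)) at_top"
    using lower eventually_ge_at_top[of 0]
  proof eventually_elim
    case (elim M)
    then have "norm (M ^ k) \<le> best M / b" using \<open>0 < b\<close> by (simp add: field_simps)
    also have "\<dots> \<le> 1 / b * norm (best M)" using \<open>0 < b\<close> by (simp add: divide_right_mono)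
    finally show ?case .
  qed
  then have "(\<lambda>M. M ^ k) \<in> O[at_top](best)" by (rule bigoI)
  with small have "err \<in> o[at_top](best)" by (rule landau_o.small_big_trans)
  then have lim: "((\<lambda>M. err M / best M) \<longlongrightarrow> 0) at_top" by (rule smalloD_tendsto)
  show ?thesis
  proof (rule tendsto_sandwich)
    show "eventually (\<lambda>M. 1 \<le> (if 0 < best M then cost M / best M else 1)) at_top"
      using bounds pos by eventually_elim simp
    show "eventually (\<lambda>M. (if 0 < best M then cost M / best M else 1) \<le> 1 + err M / best M) at_top"
      using bounds pos by eventually_elim (simp add: field_simps)
    show "((\<lambda>M. 1 + err M / best M) \<longlongrightarrow> 1) at_top"
      using tendsto_add[OF tendsto_const lim] by simp
  qed simp
qed

lemma exists_cheapest_degree: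
  fixes q :: "'e::finite \<Rightarrow> real poly"
  assumes "P \<noteq> {}" and nonzero: "\<forall>p\<in>P. \<exists>e\<in>set p. q e \<noteq> 0"
  obtains D p0 where "p0 \<in> P" "\<forall>e\<in>set p0. degree (q e) \<le> D"
    and "\<forall>p\<in>P. \<exists>e\<in>set p. q e \<noteq> 0 \<and> D \<le> degree (q e)"
proof -
  define D where "D = (LEAST n. \<exists>p\<in>P. \<forall>e\<in>set p. degree (q e) \<le> n)"
  have D_le: "D \<le> n" if "\<exists>p\<in>P. \<forall>e\<in>set p. degree (q e) \<le> n" for n
    unfolding D_def using that by (rule Least_le)
  obtain p1 where "p1 \<in> P" using assms(1) by blast
  moreover have "degree (q e) \<le> Max (range (\<lambda>e. degree (q e)))" for e by (rule Max_ge) auto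
  ultimately have "\<exists>n. \<exists>p\<in>P. \<forall>e\<in>set p. degree (q e) \<le> n" by blast
  then have "\<exists>p\<in>P. \<forall>e\<in>set p. degree (q e) \<le> D" unfolding D_def by (rule LeastI_ex)
  moreover have "\<exists>e\<in>set p. q e \<noteq> 0 \<and> D \<le> degree (q e)" if p: "p \<in> P" for p
  proof (rule ccontr)
    assume below: "\<not> ?thesis"
    obtain e0 where "e0 \<in> set p" "q e0 \<noteq> 0" using nonzero p by blast
    with below have "0 < D" by auto
    have "degree (q e) \<le> D - 1" if "e \<in> set p" for e
    proof (cases "q e = 0")
      case False
      with below that show ?thesis by auto
    qed simp
    then have "D \<le> D - 1" using p by (intro D_le) blast
    with \<open>0 < D\<close> show False by simp
  qed
  ultimately show thesis using that by blast
qed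

lemma wardrop_steep_edge_cost_smallo:
  fixes c :: "'e::finite \<Rightarrow> real \<Rightarrow> real"
  assumes "finite P" and q: "\<forall>e. \<forall>x\<ge>0. c e x = poly (q e) x"
    and mono: "\<forall>e. mono_on {0..} (c e)" and nonneg: "\<forall>e. \<forall>x\<ge>0. 0 \<le> c e x"
    and W: "\<forall>M>0. wardrop c P M (feq M)"
    and p0: "p0 \<in> P" "\<forall>e\<in>set p0. degree (q e) \<le> D" and steep: "D < degree (q e)"
  shows "(\<lambda>M. load P (feq M) e * c e (load P (feq M) e)) \<in> o[at_top](\<lambda>M. M ^ Suc D)"
proof (rule load_cost_in_smallo)
  let ?B = "\<Sum>e'\<in>set p0. \<Sum>j\<le>degree (q e'). \<bar>coeff (q e') j\<bar>"
  have f: "feasible P M (feq M)" if "0 < M" for M using W that by (simp add: wardrop_def)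
  show "eventually (\<lambda>M. 0 < load P (feq M) e \<longrightarrow> c e (load P (feq M) e) \<le> ?B * M ^ D) at_top"
    using eventually_ge_at_top[of 1]
  proof eventually_elim
    case (elim M)
    then have w: "wardrop c P M (feq M)" using W by simp
    then have fM: "feasible P M (feq M)" by (simp add: wardrop_def)
    show ?case
    proof
      assume "0 < load P (feq M) e"
      then have "c e (load P (feq M) e) \<le> path_cost c P (feq M) p0"
        by (rule wardrop_edge_cost_le_path_cost[OF w nonneg p0(1)])
      also have "\<dots> \<le> ?B * M ^ D" by (rule path_cost_le_power[OF assms(1) fM elim mono q p0(2)])
      finally show "c e (load P (feq M) e) \<le> ?B * M ^ D" .
    qed
  qed
  show "eventually (\<lambda>M. 0 \<le> load P (feq M) e) at_top"
    using eventually_gt_at_top[of 0] by eventually_elim (rule load_nonneg[OF f])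
  have "q e \<noteq> 0" using steep by auto
  then have lc: "0 < lead_coeff (q e)"
    using q nonneg by (intro lead_coeff_pos_if_nonneg) auto
  then show "0 < lead_coeff (q e) / 2" by simp
  show "eventually (\<lambda>y. lead_coeff (q e) / 2 * y ^ Suc D \<le> c e y) at_top"
    using poly_eventually_ge_half_lead[OF lc] eventually_ge_at_top[of 1]
  proof eventually_elim
    case (elim y)
    have "lead_coeff (q e) / 2 * y ^ Suc D \<le> lead_coeff (q e) / 2 * y ^ degree (q e)"
      using lc steep elim(2) by (intro mult_left_mono power_increasing) auto
    with elim q show ?case by simp
  qed
qed (use nonneg in simp)

lemma polys_eventually_ge_power:
  fixes q :: "'e::finite \<Rightarrow> real poly"
  assumes lc: "\<And>e. q e \<noteq> 0 \<Longrightarrow> 0 < lead_coeff (q e)"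
  obtains a Y where "0 < a" "1 \<le> Y"
    "\<And>e k y. q e \<noteq> 0 \<Longrightarrow> k \<le> degree (q e) \<Longrightarrow> Y \<le> y \<Longrightarrow> a * y ^ k \<le> poly (q e) y"
proof -
  define h where "h e = (if q e = 0 then 1 else lead_coeff (q e) / 2)" for e
  define a where "a = Min (range h)"
  have "0 < h e" for e using lc by (simp add: h_def)
  then have "0 < a" unfolding a_def by (simp add: Min_gr_iff)
  have a_le: "a \<le> lead_coeff (q e) / 2" if "q e \<noteq> 0" for e
  proof -
    have "a \<le> h e" unfolding a_def by (rule Min_le) auto
    with that show ?thesis by (simp add: h_def)
  qed
  have "eventually (\<lambda>y. \<forall>e. q e \<noteq> 0 \<longrightarrow> lead_coeff (q e) / 2 * y ^ degree (q e) \<le> poly (q e) y) at_top"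
  proof (rule eventually_all_finite)
    fix e
    show "eventually (\<lambda>y. q e \<noteq> 0 \<longrightarrow> lead_coeff (q e) / 2 * y ^ degree (q e) \<le> poly (q e) y) at_top"
      using poly_eventually_ge_half_lead[OF lc] by (cases "q e = 0") (auto elim: eventually_mono)
  qed
  then obtain Y where Y: "\<forall>y\<ge>Y. \<forall>e. q e \<noteq> 0 \<longrightarrow> lead_coeff (q e) / 2 * y ^ degree (q e) \<le> poly (q e) y"
    unfolding eventually_at_top_linorder by blast
  show thesis
  proof (rule that[OF \<open>0 < a\<close>, of "max 1 Y"])
    fix e k y assume e: "q e \<noteq> 0" "k \<le> degree (q e)" and "max 1 Y \<le> y"
    then have y: "1 \<le> y" "Y \<le> y" by auto
    have "a * y ^ k \<le> lead_coeff (q e) / 2 * y ^ degree (q e)"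
      using a_le[OF e(1)] \<open>0 < a\<close> y e(2) by (intro mult_mono power_increasing) auto
    also have "\<dots> \<le> poly (q e) y" using Y y e(1) by simp
    finally show "a * y ^ k \<le> poly (q e) y" .
  qed simp
qed

lemma Opt_eventually_ge_power:
  fixes c :: "'e::finite \<Rightarrow> real \<Rightarrow> real"
  assumes P: "finite P" "P \<noteq> {}" and q: "\<forall>e. \<forall>x\<ge>0. c e x = poly (q e) x"
    and mono: "\<forall>e. mono_on {0..} (c e)" and nonneg: "\<forall>e. \<forall>x\<ge>0. 0 \<le> c e x"
    and dominant: "\<forall>p\<in>P. \<exists>e\<in>set p. q e \<noteq> 0 \<and> D \<le> degree (q e)"
  obtains b where "0 < b" "eventually (\<lambda>M. b * M ^ Suc D \<le> Opt c P M) at_top"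
proof -
  obtain a Y where "0 < a" "1 \<le> Y"
    and Y: "\<And>e k y. q e \<noteq> 0 \<Longrightarrow> k \<le> degree (q e) \<Longrightarrow> Y \<le> y \<Longrightarrow> a * y ^ k \<le> poly (q e) y"
    using q nonneg by (metis lead_coeff_pos_if_nonneg polys_eventually_ge_power)
  have dominant_power: "\<forall>p\<in>P. \<exists>e\<in>set p. \<forall>y\<ge>Y. a * y ^ D \<le> c e y"
    using dominant Y q \<open>1 \<le> Y\<close> by fastforce
  define b where "b = a / real (card P) ^ Suc D"
  have bound: "b * M ^ Suc D \<le> Opt c P M" if "real (card P) * Y \<le> M" for M
  proof -
    have "0 \<le> real (card P) * Y" using \<open>1 \<le> Y\<close> by simp
    with that have "0 \<le> M" by linarith
    have "b * M ^ Suc D = a * (M / real (card P)) ^ Suc D" by (simp add: b_def power_divide)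
    also have "\<dots> \<le> Opt c P M"
    proof (rule Opt_greatest[OF P \<open>0 \<le> M\<close>])
      fix g assume "feasible P M g"
      then show "a * (M / real (card P)) ^ Suc D \<le> social_cost c (load P g)"
        using \<open>0 < a\<close> \<open>1 \<le> Y\<close> that
        by (intro social_cost_ge_power[OF P _ mono nonneg dominant_power]) auto
    qed
    finally show ?thesis .
  qed
  have "0 < b" using \<open>0 < a\<close> P by (simp add: b_def card_gt_0_iff)
  moreover have "eventually (\<lambda>M. b * M ^ Suc D \<le> Opt c P M) at_top"
    unfolding eventually_at_top_linorder using bound by blast
  ultimately show thesis by (rule that)
qed

lemma edge_potential_bounds:
  fixes c :: "'e \<Rightarrow> real \<Rightarrow> real"
  assumes q: "\<forall>e. \<forall>x\<ge>0. c e x = poly (q e) x" and nonneg: "\<forall>e. \<forall>x\<ge>0. 0 \<le> c e x"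
  obtains K where "\<And>e. 0 \<le> K e"
    "\<And>e x. 0 \<le> x \<Longrightarrow> (real D + 1) * poly (antideriv (q e)) x \<le> x * c e x + K e * (1 + x ^ D)"
    "\<And>e x. degree (q e) \<le> D \<Longrightarrow> 0 \<le> x \<Longrightarrow>
       x * c e x \<le> (real D + 1) * poly (antideriv (q e)) x + K e * (1 + x ^ D)"
proof -
  have "\<forall>e. \<exists>K\<ge>0. \<forall>x\<ge>0.
      (real D + 1) * poly (antideriv (q e)) x \<le> x * poly (q e) x + K * (1 + x ^ D) \<and>
      (degree (q e) \<le> D \<longrightarrow> x * poly (q e) x \<le> (real D + 1) * poly (antideriv (q e)) x + K * (1 + x ^ D))"
    using q nonneg by (intro allI antideriv_power_bounds impI lead_coeff_pos_if_nonneg) auto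
  with q that show thesis by metis
qed

lemma wardrop_social_cost_le_Opt_plus:
  fixes c :: "'e::finite \<Rightarrow> real \<Rightarrow> real" and K :: "'e \<Rightarrow> real"
  assumes P: "finite P" "P \<noteq> {}" and q: "\<forall>e. \<forall>x\<ge>0. c e x = poly (q e) x"
    and mono: "\<forall>e. mono_on {0..} (c e)" and nonneg: "\<forall>e. \<forall>x\<ge>0. 0 \<le> c e x"
    and "0 < M" and w: "wardrop c P M f"
    and K: "\<And>e. 0 \<le> K e"
      "\<And>e x. 0 \<le> x \<Longrightarrow> (real D + 1) * poly (antideriv (q e)) x \<le> x * c e x + K e * (1 + x ^ D)"
      "\<And>e x. degree (q e) \<le> D \<Longrightarrow> 0 \<le> x \<Longrightarrow>
         x * c e x \<le> (real D + 1) * poly (antideriv (q e)) x + K e * (1 + x ^ D)"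
  shows "social_cost c (load P f) \<le> Opt c P M + (\<Sum>e\<in>UNIV. 2 * K e) * (1 + M ^ D) +
    (\<Sum>e | D < degree (q e). load P f e * c e (load P f e))"
proof -
  let ?\<Phi> = "\<lambda>e. poly (antideriv (q e))"
  have f: "feasible P M f" using w by (simp add: wardrop_def)
  let ?x = "load P f" and ?H = "{e. D < degree (q e)}"
  have K_mono: "K e * (1 + x ^ D) \<le> K e * (1 + M ^ D)" if "0 \<le> x" "x \<le> M" for e x
    using that K(1)[of e] by (intro mult_left_mono add_left_mono power_mono) auto
  define r where "r e = K e * (1 + M ^ D) + (if e \<in> ?H then ?x e * c e (?x e) else 0)" for e
  have "social_cost c ?x - (\<Sum>e\<in>UNIV. r e + K e * (1 + M ^ D)) \<le> Opt c P M"
  proof (rule social_cost_le_Opt_plus[OF P _ w, where \<Phi> = ?\<Phi>])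
    show "0 \<le> M" "0 \<le> real D + 1" using \<open>0 < M\<close> by simp_all
    show "c e x * (y - x) \<le> ?\<Phi> e y - ?\<Phi> e x" if "0 \<le> x" "0 \<le> y" for e x y
      using q mono that by (intro antideriv_subgradient) auto
    show "(real D + 1) * ?\<Phi> e y \<le> y * c e y + K e * (1 + M ^ D)" if "0 \<le> y" "y \<le> M" for e y
      using K(2)[OF that(1), of e] K_mono[OF that, of e] by simp
    fix e
    have x: "0 \<le> ?x e" "?x e \<le> M" using load_nonneg[OF f] load_le_demand[OF P(1) f] by auto
    show "?x e * c e (?x e) \<le> (real D + 1) * ?\<Phi> e (?x e) + r e"
    proof (cases "e \<in> ?H")
      case True
      have "0 \<le> ?\<Phi> e (?x e)" using q mono nonneg x by (intro antideriv_nonneg[of "c e"]) auto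
      moreover have "0 \<le> K e * (1 + M ^ D)" using K(1)[of e] \<open>0 < M\<close> by simp
      ultimately show ?thesis using True by (simp add: r_def)
    next
      case False
      then show ?thesis using K(3)[OF _ x(1), of e] K_mono[OF x, of e] by (simp add: r_def)
    qed
  qed
  moreover have "(\<Sum>e\<in>UNIV. r e + K e * (1 + M ^ D)) =
      (\<Sum>e\<in>UNIV. 2 * K e) * (1 + M ^ D) + (\<Sum>e\<in>?H. ?x e * c e (?x e))"
  proof -
    have "r e + K e * (1 + M ^ D) = 2 * K e * (1 + M ^ D) + (if e \<in> ?H then ?x e * c e (?x e) else 0)"
      for e by (simp add: r_def)
    then show ?thesis by (simp add: sum.distrib sum_distrib_right sum.If_cases mult.assoc)
  qed
  ultimately show "social_cost c ?x \<le> Opt c P M + (\<Sum>e\<in>UNIV. 2 * K e) * (1 + M ^ D) +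
      (\<Sum>e\<in>?H. ?x e * c e (?x e))"
    by simp
qed

lemma PoA_tendsto_1_if_no_free_path:
  fixes c :: "'e::finite \<Rightarrow> real \<Rightarrow> real"
  assumes P: "finite P" "P \<noteq> {}" and q: "\<forall>e. \<forall>x\<ge>0. c e x = poly (q e) x"
    and mono: "\<forall>e. mono_on {0..} (c e)" and nonneg: "\<forall>e. \<forall>x\<ge>0. 0 \<le> c e x"
    and W: "\<forall>M>0. wardrop c P M (feq M)"
    and nonzero: "\<forall>p\<in>P. \<exists>e\<in>set p. q e \<noteq> 0"
  shows "((\<lambda>M. PoA c P M (feq M)) \<longlongrightarrow> 1) at_top"
proof -
  obtain D p0 where p0: "p0 \<in> P" "\<forall>e\<in>set p0. degree (q e) \<le> D"
    and dominant: "\<forall>p\<in>P. \<exists>e\<in>set p. q e \<noteq> 0 \<and> D \<le> degree (q e)"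
    by (rule exists_cheapest_degree[OF P(2) nonzero])
  obtain K where K: "\<And>e. 0 \<le> K e"
    "\<And>e x. 0 \<le> x \<Longrightarrow> (real D + 1) * poly (antideriv (q e)) x \<le> x * c e x + K e * (1 + x ^ D)"
    "\<And>e x. degree (q e) \<le> D \<Longrightarrow> 0 \<le> x \<Longrightarrow>
       x * c e x \<le> (real D + 1) * poly (antideriv (q e)) x + K e * (1 + x ^ D)"
    using edge_potential_bounds[OF q nonneg, where D = D] by metis
  obtain b where "0 < b" and lower: "eventually (\<lambda>M. b * M ^ Suc D \<le> Opt c P M) at_top"
    by (rule Opt_eventually_ge_power[OF P q mono nonneg dominant])
  define excess where "excess M = (\<Sum>e\<in>UNIV. 2 * K e) * (1 + M ^ D) +
    (\<Sum>e | D < degree (q e). load P (feq M) e * c e (load P (feq M) e))" for M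
  have bounds: "eventually (\<lambda>M. Opt c P M \<le> social_cost c (load P (feq M)) \<and>
      social_cost c (load P (feq M)) \<le> Opt c P M + excess M) at_top"
    using eventually_gt_at_top[of 0]
  proof eventually_elim
    case (elim M)
    then have w: "wardrop c P M (feq M)" using W by simp
    then have "feasible P M (feq M)" by (simp add: wardrop_def)
    then show ?case
      using Opt_lower[OF nonneg] wardrop_social_cost_le_Opt_plus[OF P q mono nonneg elim w K]
      by (simp add: excess_def)
  qed
  have small: "excess \<in> o[at_top](\<lambda>M. M ^ Suc D)"
    unfolding excess_def using wardrop_steep_edge_cost_smallo[OF P(1) q mono nonneg W p0]
    by (intro sum_in_smallo(1) one_plus_power_smallo big_sum_in_smallo) blast
  show ?thesis unfolding PoA_def by (rule ratio_tendsto_one[OF bounds lower \<open>0 < b\<close> small])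
qed

theorem corollary4p9:
  fixes src tgt :: "'e::finite \<Rightarrow> 'v" and orig dest :: 'v
    and P :: "'e list set" and c :: "'e \<Rightarrow> real \<Rightarrow> real"
    and feq :: "real \<Rightarrow> 'e list \<Rightarrow> real"
  assumes "finite P" and "P \<noteq> {}"
    and "\<forall>p\<in>P. is_od_path src tgt orig dest p"
    and "\<forall>e. \<exists>q :: real poly. \<forall>x\<ge>0. c e x = poly q x"
    and "\<forall>e. mono_on {0..} (c e)"
    and "\<forall>e. \<forall>x\<ge>0. c e x \<ge> 0"
    and "\<forall>M>0. wardrop c P M (feq M)"
  shows "((\<lambda>M. PoA c P M (feq M)) \<longlongrightarrow> 1) at_top"
proof -
  obtain q where q: "\<forall>e. \<forall>x\<ge>0. c e x = poly (q e) x" using assms(4) by metis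
  show ?thesis
  proof (cases "\<exists>p0\<in>P. \<forall>e\<in>set p0. q e = 0")
    case True
    then obtain p0 where p0: "p0 \<in> P" "\<forall>e\<in>set p0. \<forall>x\<ge>0. c e x = 0" using q by auto
    have "eventually (\<lambda>M. PoA c P M (feq M) = 1) at_top"
      using eventually_gt_at_top[of 0]
      by eventually_elim (use PoA_eq_1_if_free_path[OF assms(1) _ assms(6) p0] assms(7) in simp)
    then show ?thesis by (rule tendsto_eventually)
  next
    case False
    then show ?thesis
      using PoA_tendsto_1_if_no_free_path[OF assms(1,2) q assms(5,6,7)] by blast
  qed
qed

end
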